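(* For 3-Majority or 2-Choices, for every $t\ge1$ the following hold. (i) For every opinion $i$, conditioned on $\mathcal F_{t-1}$, the random variable $\alpha_t(i)-\mathbb E_{t-1}[\alpha_t(i)]$ satisfies the $(1/n,s)$-Bernstein condition, where - $s=\alpha_{t-1}(i)/n$ for 3-Majority; - $s=\alpha_{t-1}(i)(\alpha_{t-1}(i)+\gamma_{t-1})/n$ for 2-Choices. (ii) For distinct opinions $i,j$, conditioned on $\mathcal F_{t-1}$, the random variable $\delta_t(i,j)-\mathbb E_{t-1}[\delta_t(i,j)]$ satisfies the $(2/n,s)$-Bernstein condition, where - $s=\frac2n(\alpha_{t-1}(i)+\alpha_{t-1}(j))$ for 3-Majority; - $s=\frac1n(\alpha_{t-1}(i)+\alpha_{t-1}(j))(\alpha_{t-1}(i)+\alpha_{t-1}(j)+\gamma_{t-1})$ for 2-Choices. (iii) Conditioned on $\mathcal F_{t-1}$, the random variable $\gamma_{t-1}-\gamma_t$ satisfies the one-sided $(2\sqrt{\gamma_{t-1}}/n,\,s)$-Bernstein condition, where - $s=\frac4n\gamma_{t-1}^{1.5}$ for 3-Majority; - $s=\frac8n\gamma_{t-1}^2$ for 2-Choices.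
   Context: **Setting.** Let $V$ be a set of $n$ vertices and $k\in\{1,\dots,n\}$. A configuration is a map $\mathsf{opn}\colon V\to[k]$. The process is synchronous: each round $t\ge1$ produces $\mathsf{opn}_t$ from $\mathsf{opn}_{t-1}$, and all vertices make their choices independently. **3-Majority.** Each vertex $v$ samples $w_1,w_2,w_3\in V$ independently and uniformly, with replacement. It sets $\mathsf{opn}_t(v)=\mathsf{opn}_{t-1}(w_1)$ if $\mathsf{opn}_{t-1}(w_1)=\mathsf{opn}_{t-1}(w_2)$, and $\mathsf{opn}_t(v)=\mathsf{opn}_{t-1}(w_3)$ otherwise. **2-Choices.** Each vertex $v$ samples $w_1,w_2\in V$ independently and uniformly, with replacement. It sets $\mathsf{opn}_t(v)=\mathsf{opn}_{t-1}(w_1)$ if $\mathsf{opn}_{t-1}(w_1)=\mathsf{opn}_{t-1}(w_2)$, and $\mathsf{opn}_t(v)=\mathsf{opn}_{t-1}(v)$ otherwise. **Basic quantities.** - $\alpha_t(i)=|\{v:\mathsf{opn}_t(v)=i\}|/n$. - $\gamma_t=\sum_{i\in[k]}\alpha_t(i)^2$. - $\delta_t(i,j)=\alpha_t(i)-\alpha_t(j)$. **Conditioning.** $\mathcal F_t$ is generated by $\mathsf{opn}_0,\dots,\mathsf{opn}_t$, and $\mathbb E_{t-1}[\cdot]=\mathbb E[\cdot\mid\mathcal F_{t-1}]$. **Bernstein conditions.** Let $D,s\ge0$. - $X$ satisfies the $(D,s)$-Bernstein condition if $\mathbb E[e^{\lambda X}]\le\exp\big(\frac{\lambda^2 s/2}{1-|\lambda|D/3}\big)$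 for all real $\lambda$ with $|\lambda|D<3$. - It satisfies the one-sided $(D,s)$-Bernstein condition if this holds for all $\lambda\ge0$ with $\lambda D<3$. - Conditioned on $\mathcal F_{t-1}$, these are required with conditional expectations, almost surely. *)

theory Defs
  imports "HOL-Probability.Probability"
begin

text \<open>Vertices form a finite nonempty set V (of type 'v); opinions are the
naturals 1..k; a configuration is a map 'v => nat (only its values on V matter).\<close>

datatype dynamics = ThreeMajority | TwoChoices

definition new_opinion :: "dynamics \<Rightarrow> 'v set \<Rightarrow> ('v \<Rightarrow> nat) \<Rightarrow> 'v \<Rightarrow> nat pmf" where
  "new_opinion dyn V c v =
    (case dyn of
       ThreeMajority \<Rightarrow>
         do { w1 \<leftarrow> pmf_of_set V; w2 \<leftarrow> pmf_of_set V; w3 \<leftarrow> pmf_of_set V;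
              return_pmf (if c w1 = c w2 then c w1 else c w3) }
     | TwoChoices \<Rightarrow>
         do { w1 \<leftarrow> pmf_of_set V; w2 \<leftarrow> pmf_of_set V;
              return_pmf (if c w1 = c w2 then c w1 else c v) })"

text \<open>One synchronous round: all vertices update independently. This is the
conditional law of opn_t given F_{t-1} when opn_{t-1} = c (default value 0
outside V is irrelevant).\<close>
definition step :: "dynamics \<Rightarrow> 'v set \<Rightarrow> ('v \<Rightarrow> nat) \<Rightarrow> ('v \<Rightarrow> nat) pmf" where
  "step dyn V c = Pi_pmf V 0 (new_opinion dyn V c)"

definition alpha :: "'v set \<Rightarrow> ('v \<Rightarrow> nat) \<Rightarrow> nat \<Rightarrow> real" where
  "alpha V c i = real (card {v \<in> V. c v = i}) / real (card V)"

definition gamma :: "'v set \<Rightarrow> nat \<Rightarrow> ('v \<Rightarrow> nat) \<Rightarrow> real" where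
  "gamma V k c = (\<Sum>i\<in>{1..k}. (alpha V c i)\<^sup>2)"

definition delta :: "'v set \<Rightarrow> ('v \<Rightarrow> nat) \<Rightarrow> nat \<Rightarrow> nat \<Rightarrow> real" where
  "delta V c i j = alpha V c i - alpha V c j"

definition bernstein :: "'a pmf \<Rightarrow> ('a \<Rightarrow> real) \<Rightarrow> real \<Rightarrow> real \<Rightarrow> bool" where
  "bernstein M X D s \<longleftrightarrow>
     (\<forall>l::real. \<bar>l\<bar> * D < 3 \<longrightarrow>
        measure_pmf.expectation M (\<lambda>x. exp (l * X x)) \<le> exp ((l\<^sup>2 * s / 2) / (1 - \<bar>l\<bar> * D / 3)))"

definition bernstein_one_sided :: "'a pmf \<Rightarrow> ('a \<Rightarrow> real) \<Rightarrow> real \<Rightarrow> real \<Rightarrow> bool" where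
  "bernstein_one_sided M X D s \<longleftrightarrow>
     (\<forall>l::real. l \<ge> 0 \<longrightarrow> l * D < 3 \<longrightarrow>
        measure_pmf.expectation M (\<lambda>x. exp (l * X x)) \<le> exp ((l\<^sup>2 * s / 2) / (1 - l * D / 3)))"

end

theory Submission
  imports Defs
begin

text \<open>Every vertex updates independently, so alpha_t(i), delta_t(i,j) and the statistic
  sum_v alpha_(t-1)(opn_t(v)) are sums of n independent bounded terms. A centred variable bounded
  by D satisfies the (D, Var)-Bernstein condition, because exp y \<le> 1 + y + y^2 / (2 (1 - D/3))
  for |y| \<le> D < 3, and the condition adds up over independent summands. The variances follow from
  the adoption probabilities alpha(i)^2 + (1 - gamma) alpha(i) for 3-Majority and
  alpha(i)^2 + (1 - gamma) [opn(v) = i] for 2-Choices. For gamma, the tangent bound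
  gamma_t \<ge> 2 <alpha_t, alpha_(t-1)> - gamma_(t-1) together with
  E <alpha_t, alpha_(t-1)> \<ge> gamma_(t-1) dominates gamma_(t-1) - gamma_t by that linear statistic.\<close>

lemma two_mult_power_le_fact: "2 * 3 ^ m \<le> (fact (m + 2) :: real)"
proof (induction m)
  case 0
  then show ?case by simp
next
  case (Suc m)
  have "2 * 3 ^ Suc m = 3 * (2 * 3 ^ m :: real)"
    by simp
  also have "\<dots> \<le> real (Suc (m + 2)) * fact (m + 2)"
    using Suc by (intro mult_mono) auto
  also have "\<dots> = fact (Suc (m + 2))"
    by (rule fact_Suc[symmetric])
  finally show ?case
    by simp
qed

lemma exp_le_quadratic:
  fixes x b :: real
  assumes "\<bar>x\<bar> \<le> b" and "b < 3"
  shows "exp x \<le> 1 + x + x\<^sup>2 / (2 * (1 - b / 3))"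
proof -
  let ?f = "\<lambda>m. x ^ m /\<^sub>R fact m"
  have tail: "(\<lambda>m. ?f (m + 2)) sums (exp x - (\<Sum>m<2. ?f m))"
    using sums_iff_shift[of ?f 2] exp_converges[of x] by simp
  have geometric: "(\<lambda>m. x\<^sup>2/2 * (b/3) ^ m) sums (x\<^sup>2/2 * (1 / (1 - b/3)))"
    using assms by (intro sums_mult geometric_sums) auto
  have "?f (m + 2) \<le> x\<^sup>2/2 * (b/3) ^ m" for m
  proof -
    have "?f (m + 2) = x ^ (m + 2) / fact (m + 2)"
      by (simp add: divide_inverse_commute)
    also have "\<dots> \<le> \<bar>x\<bar> ^ (m + 2) / fact (m + 2)"
      by (intro divide_right_mono) (metis abs_ge_self power_abs, simp)
    also have "\<dots> = x\<^sup>2 * \<bar>x\<bar> ^ m / fact (m + 2)"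
      by (simp add: power_add power2_abs power2_eq_square mult.commute)
    also have "\<dots> \<le> x\<^sup>2 * b ^ m / (2 * 3 ^ m)"
      using assms by (intro frac_le mult_left_mono power_mono two_mult_power_le_fact) auto
    also have "\<dots> = x\<^sup>2/2 * (b/3) ^ m"
      by (simp add: power_divide)
    finally show ?thesis .
  qed
  then have "exp x - (\<Sum>m<2. ?f m) \<le> x\<^sup>2/2 * (1 / (1 - b/3))"
    by (rule sums_le[OF _ tail geometric])
  then show ?thesis
    by (simp add: numeral_2_eq_2 field_simps)
qed

lemma bernstein_mono:
  assumes "bernstein M X D s" and "s \<le> s'"
  shows "bernstein M X D s'"
  unfolding bernstein_def
proof (intro allI impI)
  fix l :: real
  assume l: "\<bar>l\<bar> * D < 3"
  then have "l\<^sup>2 * s / 2 / (1 - \<bar>l\<bar> * D / 3) \<le> l\<^sup>2 * s' / 2 / (1 - \<bar>l\<bar> * D / 3)"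
    using assms(2) by (intro divide_right_mono mult_left_mono) auto
  then show "measure_pmf.expectation M (\<lambda>x. exp (l * X x)) \<le> exp (l\<^sup>2 * s' / 2 / (1 - \<bar>l\<bar> * D / 3))"
    using assms(1) l unfolding bernstein_def by (meson exp_le_cancel_iff order.trans)
qed

lemma bernstein_one_sided_mono:
  assumes "bernstein_one_sided M X D s" and "s \<le> s'"
  shows "bernstein_one_sided M X D s'"
  unfolding bernstein_one_sided_def
proof (intro allI impI)
  fix l :: real
  assume l: "0 \<le> l" "l * D < 3"
  then have "l\<^sup>2 * s / 2 / (1 - l * D / 3) \<le> l\<^sup>2 * s' / 2 / (1 - l * D / 3)"
    using assms(2) by (intro divide_right_mono mult_left_mono) auto
  then show "measure_pmf.expectation M (\<lambda>x. exp (l * X x)) \<le> exp (l\<^sup>2 * s' / 2 / (1 - l * D / 3))"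
    using assms(1) l unfolding bernstein_one_sided_def by (meson exp_le_cancel_iff order.trans)
qed

lemma bernstein_one_sided_dominated:
  assumes "bernstein M Y D s" and "finite (set_pmf M)" and "\<And>x. X x \<le> Y x"
  shows "bernstein_one_sided M X D s"
  unfolding bernstein_one_sided_def
proof (intro allI impI)
  fix l :: real
  assume "0 \<le> l" and "l * D < 3"
  then have "measure_pmf.expectation M (\<lambda>x. exp (l * X x))
      \<le> measure_pmf.expectation M (\<lambda>x. exp (l * Y x))"
    using assms(2,3)
    by (intro integral_mono integrable_measure_pmf_finite) (auto simp: mult_left_mono)
  also have "\<dots> \<le> exp (l\<^sup>2 * s / 2 / (1 - l * D / 3))"
    using assms(1) \<open>0 \<le> l\<close> \<open>l * D < 3\<close> unfolding bernstein_def by (metis abs_of_nonneg)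
  finally show "measure_pmf.expectation M (\<lambda>x. exp (l * X x))
      \<le> exp (l\<^sup>2 * s / 2 / (1 - l * D / 3))" .
qed

lemma powr_three_halves: "0 \<le> x \<Longrightarrow> x powr (3 / 2) = x * sqrt (x :: real)"
  by (simp add: power3_eq_cube powr_half_sqrt_powr real_sqrt_mult)

lemma abs_sub_expectation_le:
  fixes f :: "'a \<Rightarrow> real"
  assumes "finite (set_pmf p)" and "\<And>y. y \<in> set_pmf p \<Longrightarrow> lo \<le> f y \<and> f y \<le> lo + D"
    and "x \<in> set_pmf p"
  shows "\<bar>f x - measure_pmf.expectation p f\<bar> \<le> D"
proof -
  have "measure_pmf.expectation p (\<lambda>_. lo) \<le> measure_pmf.expectation p f"
    and "measure_pmf.expectation p f \<le> measure_pmf.expectation p (\<lambda>_. lo + D)"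
    by (intro integral_mono_AE AE_pmfI integrable_measure_pmf_finite; use assms in simp)+
  then show ?thesis
    using assms(2)[OF assms(3)] by (simp add: abs_le_iff)
qed

lemma bernstein_centered:
  fixes Y :: "'a \<Rightarrow> real"
  assumes fin: "finite (set_pmf p)"
    and bounded: "\<And>x. x \<in> set_pmf p \<Longrightarrow> \<bar>Y x - measure_pmf.expectation p Y\<bar> \<le> D"
  shows "bernstein p (\<lambda>x. Y x - measure_pmf.expectation p Y) D (measure_pmf.variance p Y)"
  unfolding bernstein_def
proof (intro allI impI)
  fix l :: real
  assume l: "\<bar>l\<bar> * D < 3"
  note int = integrable_measure_pmf_finite[OF fin]
  define m where "m = measure_pmf.expectation p Y"
  define K where "K = l\<^sup>2 / (2 * (1 - \<bar>l\<bar> * D / 3))"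
  have "measure_pmf.expectation p (\<lambda>x. exp (l * (Y x - m)))
      \<le> measure_pmf.expectation p (\<lambda>x. 1 + l * (Y x - m) + K * (Y x - m)\<^sup>2)"
  proof (intro integral_mono_AE AE_pmfI int)
    fix x
    assume "x \<in> set_pmf p"
    then have "\<bar>l * (Y x - m)\<bar> \<le> \<bar>l\<bar> * D"
      using bounded by (simp add: abs_mult mult_left_mono m_def)
    from exp_le_quadratic[OF this l]
    show "exp (l * (Y x - m)) \<le> 1 + l * (Y x - m) + K * (Y x - m)\<^sup>2"
      by (simp add: K_def power_mult_distrib)
  qed
  also have "\<dots> = 1 + K * measure_pmf.variance p Y"
    by (simp add: int m_def)
  also have "\<dots> \<le> exp (l\<^sup>2 * measure_pmf.variance p Y / 2 / (1 - \<bar>l\<bar> * D / 3))"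
    using exp_ge_add_one_self by (simp add: K_def)
  finally show "measure_pmf.expectation p (\<lambda>x. exp (l * (Y x - m)))
      \<le> exp (l\<^sup>2 * measure_pmf.variance p Y / 2 / (1 - \<bar>l\<bar> * D / 3))" .
qed

lemma expectation_sum_Pi_pmf:
  fixes g :: "'v \<Rightarrow> 'b \<Rightarrow> real"
  assumes "finite V" and "\<And>v. v \<in> V \<Longrightarrow> finite (set_pmf (p v))"
  shows "measure_pmf.expectation (Pi_pmf V d p) (\<lambda>y. \<Sum>v\<in>V. g v (y v))
       = (\<Sum>v\<in>V. measure_pmf.expectation (p v) (g v))"
proof -
  have "finite (set_pmf (Pi_pmf V d p))"
    using assms by (simp add: set_Pi_pmf finite_PiE_dflt)
  then have "measure_pmf.expectation (Pi_pmf V d p) (\<lambda>y. \<Sum>v\<in>V. g v (y v))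
      = (\<Sum>v\<in>V. measure_pmf.expectation (map_pmf (\<lambda>y. y v) (Pi_pmf V d p)) (g v))"
    by (simp add: integrable_measure_pmf_finite)
  also have "\<dots> = (\<Sum>v\<in>V. measure_pmf.expectation (p v) (g v))"
    using assms(1) by (intro sum.cong) (simp_all add: Pi_pmf_component)
  finally show ?thesis .
qed

lemma bernstein_sum_Pi_pmf:
  fixes g :: "'v \<Rightarrow> 'b \<Rightarrow> real"
  assumes fin: "finite V" and fin_p: "\<And>v. v \<in> V \<Longrightarrow> finite (set_pmf (p v))"
    and bern: "\<And>v. v \<in> V \<Longrightarrow>
      bernstein (p v) (\<lambda>x. g v x - measure_pmf.expectation (p v) (g v)) D (s v)"
  shows "bernstein (Pi_pmf V d p) (\<lambda>y. (\<Sum>v\<in>V. g v (y v))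
            - measure_pmf.expectation (Pi_pmf V d p) (\<lambda>y. \<Sum>v\<in>V. g v (y v))) D (\<Sum>v\<in>V. s v)"
  unfolding bernstein_def
proof (intro allI impI)
  fix l :: real
  assume l: "\<bar>l\<bar> * D < 3"
  define m where "m v = measure_pmf.expectation (p v) (g v)" for v
  define den where "den = 1 - \<bar>l\<bar> * D / 3"
  have factor: "exp (l * ((\<Sum>v\<in>V. g v (y v)) - (\<Sum>v\<in>V. m v)))
      = (\<Prod>v\<in>V. exp (l * (g v (y v) - m v)))" for y
    by (simp add: exp_sum[OF fin, symmetric] sum_subtractf[symmetric] sum_distrib_left
        right_diff_distrib)
  have "measure_pmf.expectation (Pi_pmf V d p)
        (\<lambda>y. exp (l * ((\<Sum>v\<in>V. g v (y v)) - (\<Sum>v\<in>V. m v))))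
      = measure_pmf.expectation (Pi_pmf V d p) (\<lambda>y. \<Prod>v\<in>V. exp (l * (g v (y v) - m v)))"
    by (simp only: factor)
  also have "\<dots> = (\<Prod>v\<in>V. measure_pmf.expectation (p v) (\<lambda>x. exp (l * (g v x - m v))))"
    by (rule expectation_prod_Pi_pmf[OF fin]) (auto intro: integrable_measure_pmf_finite fin_p)
  also have "\<dots> \<le> (\<Prod>v\<in>V. exp (l\<^sup>2 * s v / 2 / den))"
    using bern l
    by (intro prod_mono conjI integral_nonneg_AE) (auto simp: bernstein_def m_def den_def)
  also have "\<dots> = exp (l\<^sup>2 * (\<Sum>v\<in>V. s v) / 2 / den)"
    by (simp add: exp_sum[OF fin, symmetric] sum_divide_distrib sum_distrib_left)
  finally show "measure_pmf.expectation (Pi_pmf V d p) (\<lambda>x. exp (l * ((\<Sum>v\<in>V. g v (x v))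
          - measure_pmf.expectation (Pi_pmf V d p) (\<lambda>y. \<Sum>v\<in>V. g v (y v)))))
      \<le> exp (l\<^sup>2 * (\<Sum>v\<in>V. s v) / 2 / (1 - \<bar>l\<bar> * D / 3))"
    using fin fin_p by (simp add: expectation_sum_Pi_pmf m_def den_def)
qed

lemma expectation_bind_pmf_of_set:
  fixes h :: "'b \<Rightarrow> real"
  assumes "finite V" and "V \<noteq> {}" and "\<And>w. w \<in> V \<Longrightarrow> finite (set_pmf (N w))"
  shows "measure_pmf.expectation (bind_pmf (pmf_of_set V) N) h
       = (\<Sum>w\<in>V. measure_pmf.expectation (N w) h) / real (card V)"
proof -
  define A where "A = (\<Union>w\<in>V. set_pmf (N w))"
  have "finite A"
    using assms by (auto simp: A_def)
  have "measure_pmf.expectation (bind_pmf (pmf_of_set V) N) h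
      = (\<Sum>a\<in>A. h a * ((\<Sum>w\<in>V. pmf (N w) a) / real (card V)))"
    using assms \<open>finite A\<close>
    by (subst integral_measure_pmf_real) (auto simp: A_def pmf_bind integral_pmf_of_set)
  also have "\<dots> = (\<Sum>w\<in>V. \<Sum>a\<in>A. h a * pmf (N w) a) / real (card V)"
    by (simp add: sum_divide_distrib[symmetric] sum_distrib_left sum.swap[of _ A V] mult.assoc)
  also have "\<dots> = (\<Sum>w\<in>V. measure_pmf.expectation (N w) h) / real (card V)"
    using \<open>finite A\<close>
    by (intro arg_cong2[where f="(/)"] sum.cong refl integral_measure_pmf_real[symmetric])
      (auto simp: A_def)
  finally show ?thesis .
qed

lemma expectation_if_eq:
  "measure_pmf.expectation p (\<lambda>x. if x = i then C else 0) = C * pmf p i"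
proof -
  have "(\<lambda>x. if x = i then C else 0) = (\<lambda>x. C * indicator {i} x)"
    by (auto simp: indicator_def)
  then show ?thesis
    by (simp add: measure_pmf_single)
qed

lemma variance_scale:
  fixes g :: "'a \<Rightarrow> real"
  shows "measure_pmf.variance p (\<lambda>x. C * g x) = C\<^sup>2 * measure_pmf.variance p g"
proof -
  have "(\<lambda>x. (C * g x - measure_pmf.expectation p (\<lambda>x. C * g x))\<^sup>2)
      = (\<lambda>x. C\<^sup>2 * (g x - measure_pmf.expectation p g)\<^sup>2)"
    by (simp add: power_mult_distrib right_diff_distrib[symmetric])
  then show ?thesis
    by simp
qed

lemma sum_mult_if_eq:
  fixes g :: "'a \<Rightarrow> real"
  assumes "finite A"
  shows "(\<Sum>j\<in>A. g j * (if j = i then C else 0)) = (if i \<in> A then g i * C else 0)"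
proof -
  have "(\<Sum>j\<in>A. g j * (if j = i then C else 0)) = (\<Sum>j\<in>A. if j = i then g j * C else 0)"
    by (intro sum.cong) auto
  then show ?thesis
    using assms by simp
qed

lemma variance_le_expectation_square_dev:
  fixes f :: "'a \<Rightarrow> real"
  assumes "finite (set_pmf p)"
  shows "measure_pmf.variance p f \<le> measure_pmf.expectation p (\<lambda>x. (f x - t)\<^sup>2)"
proof -
  note int = integrable_measure_pmf_finite[OF assms]
  define m where "m = measure_pmf.expectation p f"
  have "(\<lambda>x. (f x - t)\<^sup>2) = (\<lambda>x. (f x - m)\<^sup>2 + 2 * (m - t) * (f x - m) + (m - t)\<^sup>2)"
    by (rule ext) (simp add: power2_eq_square algebra_simps)
  then have "measure_pmf.expectation p (\<lambda>x. (f x - t)\<^sup>2) = measure_pmf.variance p f + (m - t)\<^sup>2"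
    by (simp add: int m_def)
  then show ?thesis
    by simp
qed

lemma integrable_pmf_indicator [simp]: "integrable (measure_pmf p) (indicator A :: _ \<Rightarrow> real)"
  by (simp add: integrable_indicator_iff measure_pmf.emeasure_finite less_top[symmetric])

lemma variance_if_eq:
  "measure_pmf.variance p (\<lambda>x. if x = i then C else 0) = C\<^sup>2 * (pmf p i - (pmf p i)\<^sup>2)"
proof -
  have square: "(\<lambda>x. ((if x = i then C else 0) - C * pmf p i)\<^sup>2)
      = (\<lambda>x. (C\<^sup>2 - 2 * C\<^sup>2 * pmf p i) * indicator {i} x + (C * pmf p i)\<^sup>2)"
    by (rule ext) (auto simp: indicator_def power2_eq_square algebra_simps)
  have "measure_pmf.variance p (\<lambda>x. if x = i then C else 0)
      = (C\<^sup>2 - 2 * C\<^sup>2 * pmf p i) * pmf p i + (C * pmf p i)\<^sup>2"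
    unfolding expectation_if_eq square by (simp add: measure_pmf_single)
  then show ?thesis
    by (simp add: power2_eq_square algebra_simps)
qed

lemma variance_if_eq_diff:
  assumes "i \<noteq> j"
  shows "measure_pmf.variance p (\<lambda>x. (if x = i then C else 0) - (if x = j then C else 0))
       = C\<^sup>2 * (pmf p i + pmf p j - (pmf p i - pmf p j)\<^sup>2)"
proof -
  define e where "e = C * pmf p i - C * pmf p j"
  have "(\<lambda>x. (if x = i then C else 0) - (if x = j then C else 0))
      = (\<lambda>x. C * indicator {i} x - C * indicator {j} x)"
    by (rule ext) (auto simp: indicator_def)
  then have mean:
    "measure_pmf.expectation p (\<lambda>x. (if x = i then C else 0) - (if x = j then C else 0)) = e"
    by (simp add: measure_pmf_single e_def)
  have square: "(\<lambda>x. ((if x = i then C else 0) - (if x = j then C else 0) - e)\<^sup>2)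
      = (\<lambda>x. (C\<^sup>2 - 2 * C * e) * indicator {i} x + (C\<^sup>2 + 2 * C * e) * indicator {j} x + e\<^sup>2)"
    using assms by (intro ext) (auto simp: indicator_def power2_eq_square algebra_simps)
  have "measure_pmf.variance p (\<lambda>x. (if x = i then C else 0) - (if x = j then C else 0))
      = (C\<^sup>2 - 2 * C * e) * pmf p i + (C\<^sup>2 + 2 * C * e) * pmf p j + e\<^sup>2"
    unfolding mean square by (simp add: measure_pmf_single)
  then show ?thesis
    by (simp add: e_def power2_eq_square algebra_simps)
qed

text \<open>The next three inequalities bound per-vertex variances of adoption indicators, with
  a = alpha(i), x = alpha(i), y = alpha(j) and g = gamma; X, Y and Z are the variances of the
  indicator difference at a vertex holding opinion i, opinion j or neither under 2-Choices.\<close>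
lemma three_majority_variance_le:
  fixes a g :: real
  assumes "0 \<le> a" "a \<le> 1" "a\<^sup>2 \<le> g" "g \<le> 1"
  defines "q \<equiv> a\<^sup>2 + (1 - g) * a"
  shows "q - q\<^sup>2 \<le> a"
proof (cases "q \<le> a")
  case True
  then show ?thesis
    by (smt (verit) zero_le_power2)
next
  case False
  have "0 \<le> a * g"
    using assms by (intro mult_nonneg_nonneg) (auto intro: order_trans[OF zero_le_power2])
  then have "q \<le> a * (1 + a)"
    by (simp add: q_def power2_eq_square algebra_simps)
  moreover have "q \<le> 1"
    using assms mult_left_le[of a "1 - g"] by (simp add: q_def)
  ultimately have "q * (1 - q) \<le> a * (1 + a) * (1 - a)"
    using False assms by (intro mult_mono) auto
  also have "\<dots> \<le> a"
    using assms by (simp add: algebra_simps power2_eq_square)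
  finally show ?thesis
    by (simp add: power2_eq_square algebra_simps)
qed

lemma two_choices_variance_le:
  fixes a g :: real
  assumes "0 \<le> a" "a \<le> 1" "a\<^sup>2 \<le> g" "g \<le> 1"
  defines "q\<^sub>1 \<equiv> a\<^sup>2 + (1 - g)" and "q\<^sub>0 \<equiv> a\<^sup>2"
  shows "a * (q\<^sub>1 - q\<^sub>1\<^sup>2) + (1 - a) * (q\<^sub>0 - q\<^sub>0\<^sup>2) \<le> a * (a + g)"
proof -
  have "q\<^sub>1 - q\<^sub>1\<^sup>2 \<le> 1 - q\<^sub>1"
    using zero_le_power2[of "1 - q\<^sub>1"] unfolding power2_diff by simp
  then have "a * (q\<^sub>1 - q\<^sub>1\<^sup>2) + (1 - a) * (q\<^sub>0 - q\<^sub>0\<^sup>2) \<le> a * (g - a\<^sup>2) + (1 - a) * a\<^sup>2"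
    using assms by (intro add_mono mult_left_mono) (auto simp: q\<^sub>1_def q\<^sub>0_def)
  also have "\<dots> = a * (a + g) - 2 * a ^ 3"
    by (simp add: algebra_simps power2_eq_square power3_eq_cube)
  finally have "a * (q\<^sub>1 - q\<^sub>1\<^sup>2) + (1 - a) * (q\<^sub>0 - q\<^sub>0\<^sup>2) \<le> a * (a + g) - 2 * a ^ 3" .
  moreover have "0 \<le> a ^ 3"
    using assms by simp
  ultimately show ?thesis
    by linarith
qed

lemma two_choices_delta_variance_le:
  fixes x y g :: real
  assumes "0 \<le> x" "0 \<le> y" "x + y \<le> 1"
  defines "X \<equiv> (x\<^sup>2 + (1 - g)) + y\<^sup>2 - ((x\<^sup>2 + (1 - g)) - y\<^sup>2)\<^sup>2"
    and "Y \<equiv> x\<^sup>2 + (y\<^sup>2 + (1 - g)) - (x\<^sup>2 - (y\<^sup>2 + (1 - g)))\<^sup>2"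
    and "Z \<equiv> x\<^sup>2 + y\<^sup>2 - (x\<^sup>2 - y\<^sup>2)\<^sup>2"
  shows "x * X + y * Y + (1 - x - y) * Z \<le> (x + y) * (x + y + g)"
proof -
  have bound: "p + r - (p - r)\<^sup>2 \<le> 1 - (p - r) + 2 * r" for p r :: real
    using zero_le_power2[of "1 - (p - r)"] by (simp add: power2_diff power2_eq_square algebra_simps)
  have "X \<le> g - x\<^sup>2 + 3 * y\<^sup>2"
    using bound[of "x\<^sup>2 + (1 - g)" "y\<^sup>2"] by (simp add: X_def)
  moreover have "Y \<le> g - y\<^sup>2 + 3 * x\<^sup>2"
    using bound[of "y\<^sup>2 + (1 - g)" "x\<^sup>2"] by (simp add: Y_def power2_commute algebra_simps)
  moreover have "Z \<le> x\<^sup>2 + y\<^sup>2"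
    by (simp add: Z_def)
  ultimately have "x * X + y * Y + (1 - x - y) * Z
      \<le> x * (g - x\<^sup>2 + 3 * y\<^sup>2) + y * (g - y\<^sup>2 + 3 * x\<^sup>2) + (1 - x - y) * (x\<^sup>2 + y\<^sup>2)"
    using assms by (intro add_mono mult_left_mono) auto
  also have "\<dots> = (x + y) * (x + y + g) - 2 * (x + y) * (x - y)\<^sup>2 - 2 * x * y"
    by (simp add: power2_eq_square algebra_simps)
  finally show ?thesis
    using assms by (smt (verit) mult_nonneg_nonneg zero_le_power2)
qed

lemma alpha_eq_sum:
  assumes "finite V"
  shows "alpha V c i = (\<Sum>v\<in>V. if c v = i then 1 / real (card V) else 0)"
  using assms by (simp add: alpha_def sum.If_cases Int_def)

lemma gamma_ge_tangent:
  "2 * (\<Sum>i\<in>{1..k}. alpha V c' i * alpha V c i) - gamma V k c \<le> gamma V k c'"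
proof -
  have "2 * (x * y) - y\<^sup>2 \<le> x\<^sup>2" for x y :: real
    using zero_le_power2[of "x - y"] unfolding power2_diff by linarith
  then have "(\<Sum>i\<in>{1..k}. 2 * (alpha V c' i * alpha V c i) - (alpha V c i)\<^sup>2)
      \<le> (\<Sum>i\<in>{1..k}. (alpha V c' i)\<^sup>2)"
    by (intro sum_mono)
  then show ?thesis
    by (simp add: gamma_def sum_subtractf sum_distrib_left)
qed

locale opinion_configuration =
  fixes V :: "'v set" and k :: nat and c :: "'v \<Rightarrow> nat"
  assumes finite_V: "finite V" and V_nonempty: "V \<noteq> {}"
    and opinion_range: "\<And>v. v \<in> V \<Longrightarrow> c v \<in> {1..k}"
begin

abbreviation "\<alpha> \<equiv> alpha V c"
abbreviation "\<gamma> \<equiv> gamma V k c"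
abbreviation "n \<equiv> real (card V)"

lemma n_pos: "n > 0"
  using finite_V V_nonempty by (simp add: card_gt_0_iff)

lemma divide_n_sq_le:
  assumes "S \<le> n * x"
  shows "S / n\<^sup>2 \<le> x / n"
proof -
  have "S / n\<^sup>2 \<le> n * x / n\<^sup>2"
    using assms by (simp add: divide_right_mono)
  then show ?thesis
    using n_pos by (simp add: power2_eq_square)
qed

lemma alpha_nonneg: "\<alpha> i \<ge> 0"
  by (simp add: alpha_def)

lemma alpha_le_1: "\<alpha> i \<le> 1"
proof -
  have "card {v\<in>V. c v = i} \<le> card V"
    by (rule card_mono[OF finite_V]) auto
  then show ?thesis
    using n_pos by (simp add: alpha_def)
qed

lemma alpha_eq_0:
  assumes "i \<notin> {1..k}"
  shows "\<alpha> i = 0"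
proof -
  have no_vertex: "{v\<in>V. c v = i} = {}"
    using assms opinion_range by auto
  show ?thesis
    unfolding alpha_def no_vertex by simp
qed

lemma sum_vertices_eq_sum_opinions:
  "(\<Sum>v\<in>V. f (c v)) = n * (\<Sum>i\<in>{1..k}. \<alpha> i * f i)"
proof -
  have "(\<Sum>v\<in>V. f (c v)) = (\<Sum>v\<in>V. \<Sum>i\<in>{1..k}. if c v = i then f i else 0)"
    using opinion_range by (intro sum.cong) (auto simp: sum.delta)
  also have "\<dots> = (\<Sum>i\<in>{1..k}. real (card {v\<in>V. c v = i}) * f i)"
    using finite_V by (subst sum.swap) (simp add: sum.If_cases Int_def)
  also have "\<dots> = n * (\<Sum>i\<in>{1..k}. \<alpha> i * f i)"
    using n_pos by (simp add: alpha_def sum_distrib_left)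
  finally show ?thesis .
qed

lemma sum_alpha: "(\<Sum>i\<in>{1..k}. \<alpha> i) = 1"
  using sum_vertices_eq_sum_opinions[of "\<lambda>_. 1"] n_pos by simp

lemma alpha_add_le_1:
  assumes "i \<in> {1..k}" and "j \<in> {1..k}" and "i \<noteq> j"
  shows "\<alpha> i + \<alpha> j \<le> 1"
proof -
  have "sum \<alpha> {i, j} \<le> sum \<alpha> {1..k}"
    using assms by (intro sum_mono2) (auto simp: alpha_nonneg)
  then show ?thesis
    using assms(3) sum_alpha by simp
qed

lemma sum_alpha_mult_if:
  assumes "i \<in> {1..k}"
  shows "(\<Sum>l\<in>{1..k}. \<alpha> l * (if l = i then X else Y)) = \<alpha> i * X + (1 - \<alpha> i) * Y"
proof -
  have "(\<Sum>l\<in>{1..k}. \<alpha> l * (if l = i then X else Y))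
      = (\<Sum>l\<in>{1..k}. \<alpha> l * Y + (if l = i then \<alpha> l * (X - Y) else 0))"
    by (intro sum.cong) (auto simp: algebra_simps)
  also have "\<dots> = (\<Sum>l\<in>{1..k}. \<alpha> l) * Y + \<alpha> i * (X - Y)"
    using assms by (simp add: sum.distrib sum_distrib_right)
  finally show ?thesis
    unfolding sum_alpha by (simp add: algebra_simps)
qed

lemma sum_alpha_mult_if2:
  assumes "i \<in> {1..k}" and "j \<in> {1..k}" and "i \<noteq> j"
  shows "(\<Sum>l\<in>{1..k}. \<alpha> l * (if l = i then X else if l = j then Y else Z))
       = \<alpha> i * X + \<alpha> j * Y + (1 - \<alpha> i - \<alpha> j) * Z"
proof -
  have "(\<Sum>l\<in>{1..k}. \<alpha> l * (if l = i then X else if l = j then Y else Z))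
      = (\<Sum>l\<in>{1..k}. \<alpha> l * Z + (if l = i then \<alpha> l * (X - Z) else 0)
          + (if l = j then \<alpha> l * (Y - Z) else 0))"
    using assms(3) by (intro sum.cong) (auto simp: algebra_simps)
  also have "\<dots> = (\<Sum>l\<in>{1..k}. \<alpha> l) * Z + \<alpha> i * (X - Z) + \<alpha> j * (Y - Z)"
    using assms by (simp add: sum.distrib sum_distrib_right)
  finally show ?thesis
    unfolding sum_alpha by (simp add: algebra_simps)
qed

lemma gamma_eq: "\<gamma> = (\<Sum>i\<in>{1..k}. \<alpha> i * \<alpha> i)"
  by (simp add: gamma_def power2_eq_square)

lemma gamma_nonneg: "\<gamma> \<ge> 0"
  by (simp add: gamma_def sum_nonneg)

lemma gamma_le_1: "\<gamma> \<le> 1"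
proof -
  have "\<gamma> \<le> (\<Sum>i\<in>{1..k}. \<alpha> i)"
    unfolding gamma_eq by (intro sum_mono mult_left_le_one_le) (auto simp: alpha_nonneg alpha_le_1)
  then show ?thesis
    using sum_alpha by linarith
qed

lemma alpha_sq_le_gamma: "(\<alpha> i)\<^sup>2 \<le> \<gamma>"
  by (cases "i \<in> {1..k}") (auto simp: gamma_def alpha_eq_0 sum_nonneg intro: member_le_sum)

lemma alpha_le_sqrt_gamma: "\<alpha> i \<le> sqrt \<gamma>"
  using alpha_sq_le_gamma[of i] alpha_nonneg[of i] by (simp add: real_le_rsqrt)

lemma overlap_eq_sum_vertices:
  "(\<Sum>i\<in>{1..k}. alpha V c' i * \<alpha> i) = (\<Sum>v\<in>V. \<alpha> (c' v)) / n"
proof -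
  have inner: "(\<Sum>i\<in>{1..k}. if c' v = i then \<alpha> i / n else 0) = \<alpha> (c' v) / n" for v
    by (cases "c' v \<in> {1..k}") (auto simp: alpha_eq_0)
  have "(\<Sum>i\<in>{1..k}. alpha V c' i * \<alpha> i)
      = (\<Sum>v\<in>V. \<Sum>i\<in>{1..k}. if c' v = i then \<alpha> i / n else 0)"
    unfolding alpha_eq_sum[OF finite_V, of c'] sum_distrib_right
    by (subst sum.swap) (auto intro!: sum.cong)
  then show ?thesis
    by (simp only: inner sum_divide_distrib)
qed

lemma sum_pairs_agree:
  "(\<Sum>w1\<in>V. \<Sum>w2\<in>V. if c w1 = c w2 then h (c w1) else K) / n\<^sup>2
   = (\<Sum>j\<in>{1..k}. (\<alpha> j)\<^sup>2 * h j) + (1 - \<gamma>) * K"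
proof -
  have inner: "(\<Sum>w2\<in>V. if c w1 = c w2 then h (c w1) else K)
      = n * (\<alpha> (c w1) * h (c w1) + (1 - \<alpha> (c w1)) * K)" if "w1 \<in> V" for w1
  proof -
    have "(\<Sum>w2\<in>V. if c w1 = c w2 then h (c w1) else K)
        = (\<Sum>w2\<in>V. (\<lambda>i. if i = c w1 then h (c w1) else K) (c w2))"
      by (intro sum.cong) auto
    also have "\<dots> = n * (\<Sum>i\<in>{1..k}. \<alpha> i * (if i = c w1 then h (c w1) else K))"
      by (rule sum_vertices_eq_sum_opinions)
    finally show ?thesis
      unfolding sum_alpha_mult_if[OF opinion_range[OF that]] .
  qed
  have "(\<Sum>w1\<in>V. \<Sum>w2\<in>V. if c w1 = c w2 then h (c w1) else K)
      = n * (\<Sum>w1\<in>V. \<alpha> (c w1) * h (c w1) + (1 - \<alpha> (c w1)) * K)"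
    unfolding sum_distrib_left by (intro sum.cong refl) (simp add: inner)
  also have "\<dots> = n * (n * (\<Sum>j\<in>{1..k}. \<alpha> j * (\<alpha> j * h j + (1 - \<alpha> j) * K)))"
    using sum_vertices_eq_sum_opinions[of "\<lambda>i. \<alpha> i * h i + (1 - \<alpha> i) * K"] by simp
  also have "(\<Sum>j\<in>{1..k}. \<alpha> j * (\<alpha> j * h j + (1 - \<alpha> j) * K))
      = (\<Sum>j\<in>{1..k}. (\<alpha> j)\<^sup>2 * h j) + (\<Sum>j\<in>{1..k}. \<alpha> j) * K - \<gamma> * K"
    unfolding gamma_eq
    by (simp add: sum.distrib sum_subtractf sum_distrib_left sum_distrib_right power2_eq_square
        algebra_simps)
  finally have "(\<Sum>w1\<in>V. \<Sum>w2\<in>V. if c w1 = c w2 then h (c w1) else K)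
      = n\<^sup>2 * ((\<Sum>j\<in>{1..k}. (\<alpha> j)\<^sup>2 * h j) + (1 - \<gamma>) * K)"
    unfolding sum_alpha by (simp add: power2_eq_square algebra_simps)
  then show ?thesis
    using n_pos by simp
qed

lemma finite_set_new_opinion: "finite (set_pmf (new_opinion dyn V c v))"
  using finite_V V_nonempty by (cases dyn) (auto simp: new_opinion_def)

lemma expectation_new_opinion_ThreeMajority:
  "measure_pmf.expectation (new_opinion ThreeMajority V c v) h
    = (\<Sum>j\<in>{1..k}. (\<alpha> j)\<^sup>2 * h j) + (1 - \<gamma>) * (\<Sum>j\<in>{1..k}. \<alpha> j * h j)"
proof -
  define H where "H = (\<Sum>j\<in>{1..k}. \<alpha> j * h j)"
  have third_sample: "(\<Sum>w3\<in>V. h (if c w1 = c w2 then c w1 else c w3)) / n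
      = (if c w1 = c w2 then h (c w1) else H)" for w1 w2
    using n_pos sum_vertices_eq_sum_opinions[of h] by (auto simp: H_def)
  have "measure_pmf.expectation (new_opinion ThreeMajority V c v) h
      = (\<Sum>w1\<in>V. (\<Sum>w2\<in>V. (\<Sum>w3\<in>V. h (if c w1 = c w2 then c w1 else c w3)) / n) / n) / n"
    using finite_V V_nonempty by (simp add: new_opinion_def expectation_bind_pmf_of_set)
  also have "\<dots> = (\<Sum>w1\<in>V. \<Sum>w2\<in>V. if c w1 = c w2 then h (c w1) else H) / n\<^sup>2"
    by (simp add: third_sample sum_divide_distrib[symmetric] power2_eq_square)
  also have "\<dots> = (\<Sum>j\<in>{1..k}. (\<alpha> j)\<^sup>2 * h j) + (1 - \<gamma>) * H"
    by (rule sum_pairs_agree)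
  finally show ?thesis
    by (simp add: H_def)
qed

lemma expectation_new_opinion_TwoChoices:
  assumes "v \<in> V"
  shows "measure_pmf.expectation (new_opinion TwoChoices V c v) h
    = (\<Sum>j\<in>{1..k}. (\<alpha> j)\<^sup>2 * h j) + (1 - \<gamma>) * h (c v)"
proof -
  have "measure_pmf.expectation (new_opinion TwoChoices V c v) h
      = (\<Sum>w1\<in>V. (\<Sum>w2\<in>V. h (if c w1 = c w2 then c w1 else c v)) / n) / n"
    using finite_V V_nonempty by (simp add: new_opinion_def expectation_bind_pmf_of_set)
  also have "\<dots> = (\<Sum>w1\<in>V. \<Sum>w2\<in>V. if c w1 = c w2 then h (c w1) else h (c v)) / n\<^sup>2"
    by (simp add: sum_divide_distrib[symmetric] power2_eq_square if_distrib)
  also have "\<dots> = (\<Sum>j\<in>{1..k}. (\<alpha> j)\<^sup>2 * h j) + (1 - \<gamma>) * h (c v)"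
    by (rule sum_pairs_agree)
  finally show ?thesis .
qed

lemma pmf_new_opinion_ThreeMajority:
  "pmf (new_opinion ThreeMajority V c v) i = (\<alpha> i)\<^sup>2 + (1 - \<gamma>) * \<alpha> i"
proof -
  have "pmf (new_opinion ThreeMajority V c v) i
      = measure_pmf.expectation (new_opinion ThreeMajority V c v) (\<lambda>x. if x = i then 1 else 0)"
    by (simp add: expectation_if_eq)
  then show ?thesis
    unfolding expectation_new_opinion_ThreeMajority sum_mult_if_eq[OF finite_atLeastAtMost]
    by (simp add: alpha_eq_0)
qed

lemma pmf_new_opinion_TwoChoices:
  assumes "v \<in> V"
  shows "pmf (new_opinion TwoChoices V c v) i = (\<alpha> i)\<^sup>2 + (1 - \<gamma>) * (if c v = i then 1 else 0)"
proof -
  have "pmf (new_opinion TwoChoices V c v) i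
      = measure_pmf.expectation (new_opinion TwoChoices V c v) (\<lambda>x. if x = i then 1 else 0)"
    by (simp add: expectation_if_eq)
  then show ?thesis
    unfolding expectation_new_opinion_TwoChoices[OF assms] sum_mult_if_eq[OF finite_atLeastAtMost]
    by (simp add: alpha_eq_0)
qed

lemma bernstein_step_sum:
  fixes f :: "nat \<Rightarrow> real"
  assumes "\<And>x. lo \<le> f x \<and> f x \<le> lo + D"
  shows "bernstein (step dyn V c)
      (\<lambda>c'. (\<Sum>v\<in>V. f (c' v)) - measure_pmf.expectation (step dyn V c) (\<lambda>c'. \<Sum>v\<in>V. f (c' v)))
      D (\<Sum>v\<in>V. measure_pmf.variance (new_opinion dyn V c v) f)"
  unfolding step_def
  using assms by (intro bernstein_sum_Pi_pmf bernstein_centered abs_sub_expectation_le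
      finite_V finite_set_new_opinion)

lemma bernstein_alpha:
  "bernstein (step dyn V c)
      (\<lambda>c'. alpha V c' i - measure_pmf.expectation (step dyn V c) (\<lambda>c''. alpha V c'' i))
      (1 / n) ((\<Sum>v\<in>V. pmf (new_opinion dyn V c v) i - (pmf (new_opinion dyn V c v) i)\<^sup>2) / n\<^sup>2)"
proof -
  define f where "f x = (if x = i then 1 / n else 0)" for x
  have "bernstein (step dyn V c)
      (\<lambda>c'. (\<Sum>v\<in>V. f (c' v)) - measure_pmf.expectation (step dyn V c) (\<lambda>c'. \<Sum>v\<in>V. f (c' v)))
      (1 / n) (\<Sum>v\<in>V. measure_pmf.variance (new_opinion dyn V c v) f)"
    by (rule bernstein_step_sum[where lo=0]) (use n_pos in \<open>simp add: f_def\<close>)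
  moreover have "alpha V c' i = (\<Sum>v\<in>V. f (c' v))" for c'
    using finite_V by (simp add: alpha_eq_sum f_def)
  moreover have "(\<Sum>v\<in>V. measure_pmf.variance (new_opinion dyn V c v) f)
      = (\<Sum>v\<in>V. pmf (new_opinion dyn V c v) i - (pmf (new_opinion dyn V c v) i)\<^sup>2) / n\<^sup>2"
    unfolding f_def variance_if_eq by (simp add: sum_divide_distrib power_divide)
  ultimately show ?thesis
    by simp
qed

lemma bernstein_delta:
  assumes "i \<noteq> j"
  shows "bernstein (step dyn V c)
      (\<lambda>c'. delta V c' i j - measure_pmf.expectation (step dyn V c) (\<lambda>c''. delta V c'' i j))
      (2 / n) ((\<Sum>v\<in>V. pmf (new_opinion dyn V c v) i + pmf (new_opinion dyn V c v) j
          - (pmf (new_opinion dyn V c v) i - pmf (new_opinion dyn V c v) j)\<^sup>2) / n\<^sup>2)"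
proof -
  define f where "f x = (if x = i then 1 / n else 0) - (if x = j then 1 / n else 0)" for x
  have "bernstein (step dyn V c)
      (\<lambda>c'. (\<Sum>v\<in>V. f (c' v)) - measure_pmf.expectation (step dyn V c) (\<lambda>c'. \<Sum>v\<in>V. f (c' v)))
      (2 / n) (\<Sum>v\<in>V. measure_pmf.variance (new_opinion dyn V c v) f)"
    by (rule bernstein_step_sum[where lo="- 1 / n"])
      (use n_pos in \<open>auto simp: f_def divide_right_mono\<close>)
  moreover have "delta V c' i j = (\<Sum>v\<in>V. f (c' v))" for c'
    using finite_V by (simp add: delta_def alpha_eq_sum f_def sum_subtractf)
  moreover have "(\<Sum>v\<in>V. measure_pmf.variance (new_opinion dyn V c v) f)
      = (\<Sum>v\<in>V. pmf (new_opinion dyn V c v) i + pmf (new_opinion dyn V c v) j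
          - (pmf (new_opinion dyn V c v) i - pmf (new_opinion dyn V c v) j)\<^sup>2) / n\<^sup>2"
    unfolding f_def variance_if_eq_diff[OF assms] by (simp add: sum_divide_distrib power_divide)
  ultimately show ?thesis
    by simp
qed

text \<open>The tangent bound gamma V k c' \<ge> 2 <alpha V c', \<alpha>> - \<gamma> dominates the drop of gamma by a
  linear statistic of the new configuration, whose mean is controlled by the hypothesis.\<close>
lemma bernstein_one_sided_gamma_drop:
  assumes overlap: "\<gamma> \<le> (\<Sum>v\<in>V. measure_pmf.expectation (new_opinion dyn V c v) \<alpha>) / n"
  shows "bernstein_one_sided (step dyn V c) (\<lambda>c'. \<gamma> - gamma V k c') (2 * sqrt \<gamma> / n)
      (4 / n\<^sup>2 * (\<Sum>v\<in>V. measure_pmf.variance (new_opinion dyn V c v) \<alpha>))"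
proof -
  define f where "f = (\<lambda>x. - 2 / n * \<alpha> x)"
  define S where "S c' = (\<Sum>v\<in>V. f (c' v))" for c'
  let ?M = "step dyn V c"
  have "bernstein ?M (\<lambda>c'. S c' - measure_pmf.expectation ?M S) (2 * sqrt \<gamma> / n)
      (\<Sum>v\<in>V. measure_pmf.variance (new_opinion dyn V c v) f)"
    unfolding S_def
    by (rule bernstein_step_sum[where lo="- 2 * sqrt \<gamma> / n"])
      (use n_pos alpha_nonneg alpha_le_sqrt_gamma in \<open>auto simp: f_def field_simps\<close>)
  moreover have "(\<Sum>v\<in>V. measure_pmf.variance (new_opinion dyn V c v) f)
      = 4 / n\<^sup>2 * (\<Sum>v\<in>V. measure_pmf.variance (new_opinion dyn V c v) \<alpha>)"
    unfolding f_def variance_scale by (simp add: sum_distrib_left power_divide)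
  ultimately have bern: "bernstein ?M (\<lambda>c'. S c' - measure_pmf.expectation ?M S) (2 * sqrt \<gamma> / n)
      (4 / n\<^sup>2 * (\<Sum>v\<in>V. measure_pmf.variance (new_opinion dyn V c v) \<alpha>))"
    by simp
  have mean_S: "measure_pmf.expectation ?M S
      = - 2 * ((\<Sum>v\<in>V. measure_pmf.expectation (new_opinion dyn V c v) \<alpha>) / n)"
    unfolding S_def step_def
      expectation_sum_Pi_pmf[OF finite_V finite_set_new_opinion, where g="\<lambda>_. f"]
    by (simp add: f_def sum_distrib_left sum_divide_distrib)
  have S_eq: "S c' = - 2 * ((\<Sum>v\<in>V. \<alpha> (c' v)) / n)" for c'
    by (simp add: S_def f_def sum_distrib_left sum_divide_distrib)
  have tangent: "2 * ((\<Sum>v\<in>V. \<alpha> (c' v)) / n) - \<gamma> \<le> gamma V k c'" for c'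
    using gamma_ge_tangent[where k=k and V=V and c'=c' and c=c]
    unfolding overlap_eq_sum_vertices by simp
  show ?thesis
  proof (rule bernstein_one_sided_dominated[OF bern])
    show "finite (set_pmf ?M)"
      using finite_V finite_set_new_opinion by (simp add: step_def set_Pi_pmf finite_PiE_dflt)
    show "\<gamma> - gamma V k c' \<le> S c' - measure_pmf.expectation ?M S" for c'
      using mean_S S_eq[of c'] tangent[of c'] overlap by linarith
  qed
qed

lemma bernstein_alpha_ThreeMajority:
  "bernstein (step ThreeMajority V c)
      (\<lambda>c'. alpha V c' i - measure_pmf.expectation (step ThreeMajority V c) (\<lambda>c''. alpha V c'' i))
      (1 / n) (\<alpha> i / n)"
proof (rule bernstein_mono[OF bernstein_alpha])
  define q where "q = (\<alpha> i)\<^sup>2 + (1 - \<gamma>) * \<alpha> i"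
  have "q - q\<^sup>2 \<le> \<alpha> i"
    unfolding q_def
    by (rule three_majority_variance_le[OF alpha_nonneg alpha_le_1 alpha_sq_le_gamma gamma_le_1])
  then show "(\<Sum>v\<in>V. pmf (new_opinion ThreeMajority V c v) i
        - (pmf (new_opinion ThreeMajority V c v) i)\<^sup>2) / n\<^sup>2 \<le> \<alpha> i / n"
    using n_pos by (intro divide_n_sq_le) (simp add: pmf_new_opinion_ThreeMajority flip: q_def)
qed

lemma bernstein_alpha_TwoChoices:
  assumes "i \<in> {1..k}"
  shows "bernstein (step TwoChoices V c)
      (\<lambda>c'. alpha V c' i - measure_pmf.expectation (step TwoChoices V c) (\<lambda>c''. alpha V c'' i))
      (1 / n) (\<alpha> i * (\<alpha> i + \<gamma>) / n)"
proof (rule bernstein_mono[OF bernstein_alpha])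
  define q\<^sub>1 where "q\<^sub>1 = (\<alpha> i)\<^sup>2 + (1 - \<gamma>)"
  define q\<^sub>0 where "q\<^sub>0 = (\<alpha> i)\<^sup>2"
  have "(\<Sum>v\<in>V. pmf (new_opinion TwoChoices V c v) i - (pmf (new_opinion TwoChoices V c v) i)\<^sup>2)
      = (\<Sum>v\<in>V. (\<lambda>l. if l = i then q\<^sub>1 - q\<^sub>1\<^sup>2 else q\<^sub>0 - q\<^sub>0\<^sup>2) (c v))"
    by (intro sum.cong) (simp_all add: pmf_new_opinion_TwoChoices q\<^sub>1_def q\<^sub>0_def)
  also have "\<dots> = n * (\<Sum>l\<in>{1..k}. \<alpha> l * (if l = i then q\<^sub>1 - q\<^sub>1\<^sup>2 else q\<^sub>0 - q\<^sub>0\<^sup>2))"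
    by (rule sum_vertices_eq_sum_opinions)
  also have "\<dots> = n * (\<alpha> i * (q\<^sub>1 - q\<^sub>1\<^sup>2) + (1 - \<alpha> i) * (q\<^sub>0 - q\<^sub>0\<^sup>2))"
    unfolding sum_alpha_mult_if[OF assms] ..
  also have "\<dots> \<le> n * (\<alpha> i * (\<alpha> i + \<gamma>))"
    unfolding q\<^sub>1_def q\<^sub>0_def using n_pos
    by (intro mult_left_mono two_choices_variance_le alpha_nonneg alpha_le_1 alpha_sq_le_gamma
        gamma_le_1) auto
  finally show "(\<Sum>v\<in>V. pmf (new_opinion TwoChoices V c v) i
        - (pmf (new_opinion TwoChoices V c v) i)\<^sup>2) / n\<^sup>2 \<le> \<alpha> i * (\<alpha> i + \<gamma>) / n"
    by (rule divide_n_sq_le)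
qed

lemma bernstein_delta_ThreeMajority:
  assumes "i \<noteq> j"
  shows "bernstein (step ThreeMajority V c)
      (\<lambda>c'. delta V c' i j - measure_pmf.expectation (step ThreeMajority V c) (\<lambda>c''. delta V c'' i j))
      (2 / n) (2 / n * (\<alpha> i + \<alpha> j))"
proof (rule bernstein_mono[OF bernstein_delta[OF assms]])
  have adopt_le: "pmf (new_opinion ThreeMajority V c v) l \<le> 2 * \<alpha> l" for v l
  proof -
    have "(\<alpha> l)\<^sup>2 \<le> \<alpha> l" and "(1 - \<gamma>) * \<alpha> l \<le> \<alpha> l"
      using alpha_nonneg alpha_le_1 gamma_nonneg gamma_le_1
      by (simp_all add: power2_eq_square mult_left_le mult_left_le_one_le)
    then show ?thesis
      by (simp add: pmf_new_opinion_ThreeMajority)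
  qed
  have "(\<Sum>v\<in>V. pmf (new_opinion ThreeMajority V c v) i + pmf (new_opinion ThreeMajority V c v) j
        - (pmf (new_opinion ThreeMajority V c v) i - pmf (new_opinion ThreeMajority V c v) j)\<^sup>2)
      \<le> (\<Sum>v\<in>V. 2 * (\<alpha> i + \<alpha> j))"
    using adopt_le by (intro sum_mono) (smt (verit) zero_le_power2)
  then show "(\<Sum>v\<in>V. pmf (new_opinion ThreeMajority V c v) i + pmf (new_opinion ThreeMajority V c v) j
        - (pmf (new_opinion ThreeMajority V c v) i - pmf (new_opinion ThreeMajority V c v) j)\<^sup>2) / n\<^sup>2
      \<le> 2 / n * (\<alpha> i + \<alpha> j)"
    using divide_n_sq_le by simp
qed

lemma bernstein_delta_TwoChoices:
  assumes i: "i \<in> {1..k}" and j: "j \<in> {1..k}" and "i \<noteq> j"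
  shows "bernstein (step TwoChoices V c)
      (\<lambda>c'. delta V c' i j - measure_pmf.expectation (step TwoChoices V c) (\<lambda>c''. delta V c'' i j))
      (2 / n) (1 / n * (\<alpha> i + \<alpha> j) * (\<alpha> i + \<alpha> j + \<gamma>))"
proof (rule bernstein_mono[OF bernstein_delta[OF \<open>i \<noteq> j\<close>]])
  let ?x = "\<alpha> i" and ?y = "\<alpha> j"
  define X where "X = (?x\<^sup>2 + (1 - \<gamma>)) + ?y\<^sup>2 - ((?x\<^sup>2 + (1 - \<gamma>)) - ?y\<^sup>2)\<^sup>2"
  define Y where "Y = ?x\<^sup>2 + (?y\<^sup>2 + (1 - \<gamma>)) - (?x\<^sup>2 - (?y\<^sup>2 + (1 - \<gamma>)))\<^sup>2"
  define Z where "Z = ?x\<^sup>2 + ?y\<^sup>2 - (?x\<^sup>2 - ?y\<^sup>2)\<^sup>2"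
  have "(\<Sum>v\<in>V. pmf (new_opinion TwoChoices V c v) i + pmf (new_opinion TwoChoices V c v) j
        - (pmf (new_opinion TwoChoices V c v) i - pmf (new_opinion TwoChoices V c v) j)\<^sup>2)
      = (\<Sum>v\<in>V. (\<lambda>l. if l = i then X else if l = j then Y else Z) (c v))"
    using \<open>i \<noteq> j\<close> by (intro sum.cong) (auto simp: pmf_new_opinion_TwoChoices X_def Y_def Z_def)
  also have "\<dots> = n * (\<Sum>l\<in>{1..k}. \<alpha> l * (if l = i then X else if l = j then Y else Z))"
    by (rule sum_vertices_eq_sum_opinions)
  also have "\<dots> = n * (?x * X + ?y * Y + (1 - ?x - ?y) * Z)"
    unfolding sum_alpha_mult_if2[OF i j \<open>i \<noteq> j\<close>] ..
  also have "\<dots> \<le> n * ((?x + ?y) * (?x + ?y + \<gamma>))"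
    unfolding X_def Y_def Z_def using n_pos alpha_add_le_1[OF i j \<open>i \<noteq> j\<close>]
    by (intro mult_left_mono two_choices_delta_variance_le alpha_nonneg) auto
  finally show "(\<Sum>v\<in>V. pmf (new_opinion TwoChoices V c v) i + pmf (new_opinion TwoChoices V c v) j
        - (pmf (new_opinion TwoChoices V c v) i - pmf (new_opinion TwoChoices V c v) j)\<^sup>2) / n\<^sup>2
      \<le> 1 / n * (?x + ?y) * (?x + ?y + \<gamma>)"
    using divide_n_sq_le by simp
qed

definition moment :: "nat \<Rightarrow> real" where
  "moment m = (\<Sum>j\<in>{1..k}. \<alpha> j ^ m)"

lemma moment_2: "moment 2 = \<gamma>"
  by (simp add: moment_def gamma_def)

lemma sq_gamma_le_moment_3: "\<gamma>\<^sup>2 \<le> moment 3"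
proof -
  have "0 \<le> (\<Sum>j\<in>{1..k}. \<alpha> j * (\<alpha> j - \<gamma>)\<^sup>2)"
    by (intro sum_nonneg) (simp add: alpha_nonneg)
  also have "\<dots> = (\<Sum>j\<in>{1..k}. \<alpha> j ^ 3 - 2 * \<gamma> * (\<alpha> j)\<^sup>2 + \<gamma>\<^sup>2 * \<alpha> j)"
    by (intro sum.cong) (simp_all add: power2_eq_square power3_eq_cube algebra_simps)
  also have "\<dots> = moment 3 - 2 * \<gamma> * \<gamma> + \<gamma>\<^sup>2 * (\<Sum>j\<in>{1..k}. \<alpha> j)"
    by (simp add: sum.distrib sum_subtractf sum_distrib_left moment_def gamma_def)
  finally show ?thesis
    unfolding sum_alpha by (simp add: power2_eq_square)
qed

lemma moment_Suc_le_sqrt_gamma: "moment (Suc m) \<le> sqrt \<gamma> * moment m"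
  unfolding moment_def sum_distrib_left
  by (intro sum_mono) (simp add: alpha_le_sqrt_gamma alpha_nonneg mult_right_mono)

lemma moment_Suc_le: "moment (Suc m) \<le> moment m"
  unfolding moment_def
  by (intro sum_mono) (simp add: alpha_le_1 alpha_nonneg mult_left_le_one_le)

lemma moment_3_le: "moment 3 \<le> sqrt \<gamma> * \<gamma>"
  using moment_Suc_le_sqrt_gamma[of 2] by (simp add: moment_2 numeral_3_eq_3)

lemma moment_4_le: "moment 4 \<le> sqrt \<gamma> * moment 3"
  using moment_Suc_le_sqrt_gamma[of 3] by (simp add: numeral_eq_Suc)

lemma moment_4_le_sq_gamma: "moment 4 \<le> \<gamma>\<^sup>2"
proof -
  have "moment 4 \<le> sqrt \<gamma> * (sqrt \<gamma> * \<gamma>)"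
    using moment_4_le moment_3_le gamma_nonneg
    by (meson mult_left_mono order.trans real_sqrt_ge_zero)
  also have "\<dots> = \<gamma>\<^sup>2"
    using gamma_nonneg by (simp add: power2_eq_square flip: mult.assoc)
  finally show ?thesis .
qed

lemma variance_new_opinion_alpha:
  "measure_pmf.variance (new_opinion dyn V c v) \<alpha>
    = measure_pmf.expectation (new_opinion dyn V c v) (\<lambda>x. (\<alpha> x)\<^sup>2)
      - (measure_pmf.expectation (new_opinion dyn V c v) \<alpha>)\<^sup>2"
  by (intro measure_pmf.variance_eq integrable_measure_pmf_finite finite_set_new_opinion)

lemma bernstein_gamma_ThreeMajority:
  "bernstein_one_sided (step ThreeMajority V c) (\<lambda>c'. \<gamma> - gamma V k c') (2 * sqrt \<gamma> / n)
     (4 / n * \<gamma> powr (3 / 2))"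
proof (rule bernstein_one_sided_mono[OF bernstein_one_sided_gamma_drop])
  let ?p = "new_opinion ThreeMajority V c"
  define e where "e = moment 3 + (1 - \<gamma>) * \<gamma>"
  have mean: "measure_pmf.expectation (?p v) \<alpha> = e" for v
    by (simp add: expectation_new_opinion_ThreeMajority e_def moment_def gamma_eq
        power2_eq_square power3_eq_cube)
  have "e \<ge> \<gamma>"
    using sq_gamma_le_moment_3 by (simp add: e_def power2_eq_square algebra_simps)
  then show "\<gamma> \<le> (\<Sum>v\<in>V. measure_pmf.expectation (?p v) \<alpha>) / n"
    using n_pos by (simp add: mean)
  have "measure_pmf.expectation (?p v) (\<lambda>x. (\<alpha> x)\<^sup>2) = moment 4 + (1 - \<gamma>) * moment 3" for v
    by (simp add: expectation_new_opinion_ThreeMajority moment_def power2_eq_square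
        power3_eq_cube power4_eq_xxxx mult.assoc)
  then have variance: "measure_pmf.variance (?p v) \<alpha> = moment 4 + (1 - \<gamma>) * moment 3 - e\<^sup>2" for v
    unfolding variance_new_opinion_alpha by (simp add: mean)
  define r where "r = sqrt \<gamma>"
  have r: "r * r = \<gamma>" "0 \<le> r" "r \<le> 1"
    using gamma_nonneg gamma_le_1 by (auto simp: r_def)
  have "moment 4 + (1 - \<gamma>) * moment 3 \<le> moment 3 * (r + 1 - \<gamma>)"
    using moment_4_le by (simp add: r_def algebra_simps)
  also have "\<dots> \<le> r * \<gamma> * (r + 1 - \<gamma>)"
  proof (rule mult_right_mono)
    show "moment 3 \<le> r * \<gamma>"
      using moment_3_le by (simp add: r_def)
    show "0 \<le> r + 1 - \<gamma>"
      using r gamma_le_1 by linarith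
  qed
  also have "\<dots> = \<gamma>\<^sup>2 + \<gamma> * r * (1 - \<gamma>)"
    unfolding r(1)[symmetric] by (simp add: power2_eq_square algebra_simps)
  also have "\<dots> \<le> \<gamma>\<^sup>2 + \<gamma> * r"
    using r gamma_nonneg gamma_le_1 by (simp add: mult_left_le)
  moreover have "\<gamma>\<^sup>2 \<le> e\<^sup>2"
    using \<open>e \<ge> \<gamma>\<close> gamma_nonneg by (simp add: power_mono)
  ultimately have "measure_pmf.variance (?p v) \<alpha> \<le> \<gamma> * r" for v
    unfolding variance by linarith
  then have "(\<Sum>v\<in>V. measure_pmf.variance (?p v) \<alpha>) \<le> n * (\<gamma> * r)"
    using sum_mono[of V "\<lambda>v. measure_pmf.variance (?p v) \<alpha>" "\<lambda>_. \<gamma> * r"] by simp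
  then show "4 / n\<^sup>2 * (\<Sum>v\<in>V. measure_pmf.variance (?p v) \<alpha>) \<le> 4 / n * \<gamma> powr (3 / 2)"
    using divide_n_sq_le gamma_nonneg by (simp add: powr_three_halves r_def)
qed

lemma bernstein_gamma_TwoChoices:
  "bernstein_one_sided (step TwoChoices V c) (\<lambda>c'. \<gamma> - gamma V k c') (2 * sqrt \<gamma> / n)
     (8 / n * \<gamma>\<^sup>2)"
proof (rule bernstein_one_sided_mono[OF bernstein_one_sided_gamma_drop])
  let ?p = "new_opinion TwoChoices V c"
  have "(\<Sum>v\<in>V. measure_pmf.expectation (?p v) \<alpha>) = (\<Sum>v\<in>V. moment 3 + (1 - \<gamma>) * \<alpha> (c v))"
    by (intro sum.cong) (simp_all add: expectation_new_opinion_TwoChoices moment_def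
        power2_eq_square power3_eq_cube mult.assoc)
  also have "\<dots> = n * moment 3 + (1 - \<gamma>) * (\<Sum>v\<in>V. \<alpha> (c v))"
    by (simp add: sum.distrib flip: sum_distrib_left)
  also have "(\<Sum>v\<in>V. \<alpha> (c v)) = n * \<gamma>"
    using sum_vertices_eq_sum_opinions[of \<alpha>] by (simp add: gamma_eq)
  finally have "(\<Sum>v\<in>V. measure_pmf.expectation (?p v) \<alpha>) = n * (moment 3 + (1 - \<gamma>) * \<gamma>)"
    by (simp add: algebra_simps)
  then have "(\<Sum>v\<in>V. measure_pmf.expectation (?p v) \<alpha>) / n = moment 3 + (1 - \<gamma>) * \<gamma>"
    using n_pos by simp
  then show "\<gamma> \<le> (\<Sum>v\<in>V. measure_pmf.expectation (?p v) \<alpha>) / n"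
    using sq_gamma_le_moment_3 by (simp add: power2_eq_square algebra_simps)
  define F where "F l = (\<Sum>j\<in>{1..k}. (\<alpha> j)\<^sup>2 * (\<alpha> j - \<alpha> l)\<^sup>2)" for l
  have F_le: "F l \<le> moment 4 + (\<alpha> l)\<^sup>2 * \<gamma>" for l
  proof -
    have "F l \<le> (\<Sum>j\<in>{1..k}. (\<alpha> j)\<^sup>2 * ((\<alpha> j)\<^sup>2 + (\<alpha> l)\<^sup>2))"
      unfolding F_def using alpha_nonneg
      by (intro sum_mono mult_left_mono) (simp_all add: power2_diff mult_nonneg_nonneg)
    also have "\<dots> = moment 4 + (\<alpha> l)\<^sup>2 * \<gamma>"
      by (simp add: moment_def gamma_def distrib_left sum.distrib sum_distrib_left
          power4_eq_xxxx power2_eq_square mult.commute mult.left_commute)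
    finally show ?thesis .
  qed
  have weighted: "(\<Sum>l\<in>{1..k}. \<alpha> l * (M + (\<alpha> l)\<^sup>2 * \<gamma>)) = M + \<gamma> * moment 3" for M
  proof -
    have "(\<Sum>l\<in>{1..k}. \<alpha> l * (M + (\<alpha> l)\<^sup>2 * \<gamma>)) = M * (\<Sum>l\<in>{1..k}. \<alpha> l) + \<gamma> * moment 3"
      by (simp add: moment_def distrib_left sum.distrib sum_distrib_left power2_eq_square
          power3_eq_cube mult.commute mult.left_commute)
    then show ?thesis
      unfolding sum_alpha by simp
  qed
  have "(\<Sum>v\<in>V. measure_pmf.variance (?p v) \<alpha>)
      \<le> (\<Sum>v\<in>V. measure_pmf.expectation (?p v) (\<lambda>x. (\<alpha> x - \<alpha> (c v))\<^sup>2))"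
    by (intro sum_mono variance_le_expectation_square_dev finite_set_new_opinion)
  also have "\<dots> = (\<Sum>v\<in>V. F (c v))"
    by (intro sum.cong) (simp_all add: expectation_new_opinion_TwoChoices F_def)
  also have "\<dots> = n * (\<Sum>l\<in>{1..k}. \<alpha> l * F l)"
    by (rule sum_vertices_eq_sum_opinions)
  also have "\<dots> \<le> n * (\<Sum>l\<in>{1..k}. \<alpha> l * (moment 4 + (\<alpha> l)\<^sup>2 * \<gamma>))"
    using n_pos F_le alpha_nonneg by (intro mult_left_mono sum_mono) auto
  also have "\<dots> = n * (moment 4 + \<gamma> * moment 3)"
    by (simp only: weighted)
  also have "\<dots> \<le> n * (2 * \<gamma>\<^sup>2)"
  proof -
    have "moment 3 \<le> \<gamma>"
      using moment_Suc_le[of 2] by (simp add: moment_2 numeral_3_eq_3)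
    then have "\<gamma> * moment 3 \<le> \<gamma>\<^sup>2"
      using gamma_nonneg by (simp add: power2_eq_square mult_left_mono)
    then show ?thesis
      using moment_4_le_sq_gamma n_pos by (intro mult_left_mono) auto
  qed
  finally show "4 / n\<^sup>2 * (\<Sum>v\<in>V. measure_pmf.variance (?p v) \<alpha>) \<le> 8 / n * \<gamma>\<^sup>2"
    using divide_n_sq_le by simp
qed

end

theorem lemma4p2:
  fixes V :: "'v set" and k :: nat and c :: "'v \<Rightarrow> nat" and dyn :: dynamics
  assumes "finite V" and "V \<noteq> {}"
    and "1 \<le> k" and "k \<le> card V"
    and "\<forall>v\<in>V. c v \<in> {1..k}"
  defines "n \<equiv> real (card V)"
  defines "M \<equiv> step dyn V c"
  shows
    "(\<forall>i\<in>{1..k}.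
        bernstein M (\<lambda>c'. alpha V c' i - measure_pmf.expectation M (\<lambda>c''. alpha V c'' i))
          (1 / n)
          (case dyn of ThreeMajority \<Rightarrow> alpha V c i / n
                     | TwoChoices \<Rightarrow> alpha V c i * (alpha V c i + gamma V k c) / n))
   \<and> (\<forall>i\<in>{1..k}. \<forall>j\<in>{1..k}. i \<noteq> j \<longrightarrow>
        bernstein M (\<lambda>c'. delta V c' i j - measure_pmf.expectation M (\<lambda>c''. delta V c'' i j))
          (2 / n)
          (case dyn of ThreeMajority \<Rightarrow> 2 / n * (alpha V c i + alpha V c j)
                     | TwoChoices \<Rightarrow> 1 / n * (alpha V c i + alpha V c j)
                                      * (alpha V c i + alpha V c j + gamma V k c)))
   \<and> bernstein_one_sided M (\<lambda>c'. gamma V k c - gamma V k c')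
          (2 * sqrt (gamma V k c) / n)
          (case dyn of ThreeMajority \<Rightarrow> 4 / n * gamma V k c powr (3/2)
                     | TwoChoices \<Rightarrow> 8 / n * (gamma V k c)\<^sup>2)"
proof -
  interpret opinion_configuration V k c
    using assms(1,2,5) by unfold_locales auto
  show ?thesis
  proof (cases dyn)
    case ThreeMajority
    show ?thesis
      unfolding M_def n_def ThreeMajority dynamics.case
      by (intro conjI ballI impI bernstein_alpha_ThreeMajority bernstein_delta_ThreeMajority
          bernstein_gamma_ThreeMajority)
  next
    case TwoChoices
    show ?thesis
      unfolding M_def n_def TwoChoices dynamics.case
      by (intro conjI ballI impI bernstein_alpha_TwoChoices bernstein_delta_TwoChoices
          bernstein_gamma_TwoChoices)
  qed
qed

end
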